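(* Let $\mathbf X\in\mathbb R^{n\times T}$, $k\le\min(n,T)$, $\mathbf W\in\mathbb R^{k\times n}$. Then $$\min_{\mathbf Y\in\mathbb R^{k\times T}}\max_{\mathbf M\in\mathbb R^{k\times k}}G(\mathbf Y,\mathbf M)=\max_{\mathbf M\in\mathbb R^{k\times k}}\min_{\mathbf Y\in\mathbb R^{k\times T}}G(\mathbf Y,\mathbf M)=-\frac2{T^{1/2}}\mathrm{Tr}\big((\mathbf W\mathbf X\mathbf X^\top\mathbf W^\top)^{1/2}\big),$$ where $G(\mathbf Y,\mathbf M)=-\frac2T\mathrm{Tr}(\mathbf X^\top\mathbf W^\top\mathbf Y)+\mathrm{Tr}\big(\mathbf M(\frac1T\mathbf Y\mathbf Y^\top-\mathbf I)\big)$. Consequently, with $L_{PSW}(\mathbf W,\mathbf M,\mathbf Y)=G(\mathbf Y,\mathbf M)+\mathrm{Tr}(\mathbf W^\top\mathbf W)$, one has $\max_{\mathbf M}\min_{\mathbf Y}L_{PSW}=\mathrm{Tr}\big(-\frac2{T^{1/2}}(\mathbf W\mathbf X\mathbf X^\top\mathbf W^\top)^{1/2}+\mathbf W\mathbf W^\top\big)$.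
   Context: Matrix square roots of positive semidefinite matrices are the positive semidefinite ones. *)

theory Defs
  imports "HOL-Analysis.Analysis"
begin

definition psd :: "real^'n^'n \<Rightarrow> bool" where
  "psd A \<longleftrightarrow> transpose A = A \<and> (\<forall>x. x \<bullet> (A *v x) \<ge> 0)"

definition psd_sqrt :: "real^'n^'n \<Rightarrow> real^'n^'n" where
  "psd_sqrt A = (THE B. psd B \<and> B ** B = A)"

text \<open>X is n x T, W is k x n, Y is k x T, M is k x k.\<close>
definition G :: "real^'t^'n \<Rightarrow> real^'n^'k \<Rightarrow> real^'t^'k \<Rightarrow> real^'k^'k \<Rightarrow> real" where
  "G X W Y M =
     - (2 / real CARD('t)) * trace (transpose X ** transpose W ** Y)
     + trace (M ** ((1 / real CARD('t)) *\<^sub>R (Y ** transpose Y) - mat 1))"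

definition L_PSW :: "real^'t^'n \<Rightarrow> real^'n^'k \<Rightarrow> real^'k^'k \<Rightarrow> real^'t^'k \<Rightarrow> real" where
  "L_PSW X W M Y = G X W Y M + trace (transpose W ** W)"

end

theory Submission
  imports Defs
begin

text \<open>A saddle point of \<open>G\<close> gives both minimax values at once. It comes from the polar
  decomposition \<open>W X = S U\<close> with \<open>S = (W X X\<^sup>T W\<^sup>T)\<^sup>1\<^sup>/\<^sup>2\<close> and \<open>U U\<^sup>T = I\<close>: at \<open>Y\<^sub>0 = \<surd>T U\<close>
  the constraint term vanishes, so \<open>G(Y\<^sub>0, M) = -(2/\<surd>T) tr S\<close> for every \<open>M\<close>; at \<open>M\<^sub>0 = S/\<surd>T\<close>
  the excess \<open>G(Y, M\<^sub>0) + (2/\<surd>T) tr S\<close> is the nonnegative quantity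
  \<open>tr((Y - \<surd>T U)\<^sup>T S (Y - \<surd>T U)) / T\<^sup>3\<^sup>/\<^sup>2\<close>. The square root and the polar factor are
  built on an orthonormal eigenbasis of \<open>W X X\<^sup>T W\<^sup>T\<close>, whose existence (the spectral theorem) is
  proved by maximizing the Rayleigh quotient on invariant subspaces.\<close>

section \<open>Orthonormal bases\<close>


definition orthonormal_basis :: "'a::euclidean_space set \<Rightarrow> bool" where
  "orthonormal_basis B \<longleftrightarrow>
     finite B \<and> pairwise orthogonal B \<and> (\<forall>b\<in>B. norm b = 1) \<and> span B = UNIV"

lemma orthonormal_basis_inner:
  assumes "orthonormal_basis B" "b \<in> B" "c \<in> B"
  shows "b \<bullet> c = (if b = c then 1 else 0)"
  using assms by (auto simp: orthonormal_basis_def pairwise_def orthogonal_def norm_eq_1)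

lemma orthonormal_basis_expansion:
  assumes "orthonormal_basis B"
  shows "(\<Sum>b\<in>B. (x \<bullet> b) *\<^sub>R b) = x"
  using assms orthonormal_basis_expand[of B x] by (auto simp: orthonormal_basis_def)

lemma orthonormal_basis_parseval:
  assumes "orthonormal_basis B"
  shows "x \<bullet> y = (\<Sum>b\<in>B. (x \<bullet> b) * (y \<bullet> b))"
proof -
  have "x \<bullet> y = x \<bullet> (\<Sum>b\<in>B. (y \<bullet> b) *\<^sub>R b)"
    using orthonormal_basis_expansion[OF assms] by simp
  then show ?thesis by (simp add: inner_sum_right mult.commute)
qed

lemma inner_sum_orthonormal:
  assumes "finite I" "i \<in> I" "\<And>j k. j \<in> I \<Longrightarrow> k \<in> I \<Longrightarrow> w j \<bullet> w k = (if j = k then 1 else 0)"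
  shows "(\<Sum>j\<in>I. c j *\<^sub>R w j) \<bullet> w i = c i"
proof -
  have "(\<Sum>j\<in>I. c j *\<^sub>R w j) \<bullet> w i = (\<Sum>j\<in>I. c j * (if j = i then 1 else 0))"
    by (simp add: inner_sum_left assms(2,3) cong: sum.cong)
  also have "\<dots> = c i" using assms(1,2) by (simp add: if_distrib cong: if_cong)
  finally show ?thesis .
qed

lemma matrix_vector_mult_orthonormal_expansion:
  fixes P :: "real^'m^'n"
  assumes "orthonormal_basis B"
  shows "P *v x = (\<Sum>b\<in>B. (x \<bullet> b) *\<^sub>R (P *v b))"
proof -
  have "P *v x = P *v (\<Sum>b\<in>B. (x \<bullet> b) *\<^sub>R b)"
    using orthonormal_basis_expansion[OF assms] by simp
  then show ?thesis by (simp add: vec.sum matrix_vector_mult_scaleR)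
qed

lemma matrix_eq_on_orthonormal_basis:
  fixes P Q :: "real^'m^'n"
  assumes "orthonormal_basis B" "\<And>b. b \<in> B \<Longrightarrow> P *v b = Q *v b"
  shows "P = Q"
proof -
  have "P *v x = Q *v x" for x
    using assms by (simp add: matrix_vector_mult_orthonormal_expansion[OF assms(1), of P x]
        matrix_vector_mult_orthonormal_expansion[OF assms(1), of Q x])
  then show ?thesis by (simp add: matrix_eq)
qed

section \<open>The spectral theorem for symmetric matrices\<close>

lemma inner_matrix_symmetric:
  fixes C :: "real^'n^'n"
  assumes "transpose C = C"
  shows "x \<bullet> (C *v y) = (C *v x) \<bullet> y"
  by (metis assms dot_lmul_matrix transpose_matrix_vector)

lemma quadratic_form_max_on_sphere:
  fixes C :: "real^'n^'n"
  assumes "subspace S" "S \<noteq> {0}"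
  obtains v where "v \<in> S" "norm v = 1" "\<And>x. x \<in> S \<Longrightarrow> x \<bullet> (C *v x) \<le> (v \<bullet> (C *v v)) * (x \<bullet> x)"
proof -
  define q where "q x = x \<bullet> (C *v x)" for x :: "real^'n"
  define K where "K = S \<inter> sphere 0 1"
  have normalize: "x /\<^sub>R norm x \<in> K" if "x \<in> S" "x \<noteq> 0" for x
    using that assms(1) by (auto simp: K_def subspace_scale)
  have "compact K"
    unfolding K_def using closed_subspace[OF assms(1)] by (simp add: closed_Int_compact)
  moreover have "K \<noteq> {}"
    using assms normalize subspace_0 by blast
  moreover have "continuous_on K q"
    unfolding q_def by (intro continuous_intros linear_continuous_on bounded_linear_intros)
  ultimately obtain v where v: "v \<in> K" and vmax: "\<And>y. y \<in> K \<Longrightarrow> q y \<le> q v"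
    using continuous_attains_sup by metis
  have "q x \<le> q v * (x \<bullet> x)" if "x \<in> S" for x
  proof (cases "x = 0")
    case False
    have "q (x /\<^sub>R norm x) = q x / (norm x)\<^sup>2"
      by (simp add: q_def matrix_vector_mult_scaleR power2_eq_square field_simps)
    then have "q x / (norm x)\<^sup>2 \<le> q v"
      using vmax[OF normalize[OF that False]] by simp
    then show ?thesis
      using False by (simp add: divide_le_eq power2_norm_eq_inner)
  qed (simp add: q_def)
  then show ?thesis
    using that v by (auto simp: K_def q_def)
qed

lemma quadratic_nonpos_imp_linear_coeff_zero:
  fixes c d :: real
  assumes "\<And>t. 2 * t * c + t\<^sup>2 * d \<le> 0"
  shows "c = 0"
proof -
  define e where "e = 1 + \<bar>d\<bar>"
  have e: "e > 0" "2 * e + d > 0" unfolding e_def by auto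
  have "c\<^sup>2 * (2 * e + d) = (2 * (c / e) * c + (c / e)\<^sup>2 * d) * e\<^sup>2"
    using e by (simp add: field_simps power2_eq_square)
  also have "\<dots> \<le> 0"
    by (rule mult_nonpos_nonneg[OF assms]) simp
  finally have "c\<^sup>2 \<le> 0"
    using e by (simp add: mult_le_0_iff)
  then show ?thesis by simp
qed

text \<open>First-order condition for the maximum of the Rayleigh quotient: perturbing the maximizer
  \<open>v\<close> along \<open>w \<in> S\<close> shows that \<open>C v - l v\<close> is orthogonal to \<open>S\<close>, and it lies in \<open>S\<close>.\<close>

lemma quadratic_form_maximizer_eigenvector:
  fixes C :: "real^'n^'n"
  assumes sym: "transpose C = C" and S: "subspace S" and inv: "\<And>x. x \<in> S \<Longrightarrow> C *v x \<in> S"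
    and v: "v \<in> S" "v \<bullet> v = 1"
    and vmax: "\<And>x. x \<in> S \<Longrightarrow> x \<bullet> (C *v x) \<le> l * (x \<bullet> x)"
    and l: "l = v \<bullet> (C *v v)"
  shows "C *v v = l *\<^sub>R v"
proof -
  have orth: "w \<bullet> (C *v v - l *\<^sub>R v) = 0" if w: "w \<in> S" for w
  proof (rule quadratic_nonpos_imp_linear_coeff_zero)
    fix t :: real
    have "v + t *\<^sub>R w \<in> S"
      using v w S by (simp add: subspace_add subspace_scale)
    then have "(v + t *\<^sub>R w) \<bullet> (C *v (v + t *\<^sub>R w)) \<le> l * ((v + t *\<^sub>R w) \<bullet> (v + t *\<^sub>R w))"
      by (rule vmax)
    then show "2 * t * (w \<bullet> (C *v v - l *\<^sub>R v)) + t\<^sup>2 * (w \<bullet> (C *v w) - l * (w \<bullet> w)) \<le> 0"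
      using inner_matrix_symmetric[OF sym, of v w] v(2) l
      by (simp add: algebra_simps inner_add_left inner_add_right power2_eq_square inner_commute)
  qed
  have "C *v v - l *\<^sub>R v \<in> S"
    using inv v S by (simp add: subspace_diff subspace_scale)
  then have "(C *v v - l *\<^sub>R v) \<bullet> (C *v v - l *\<^sub>R v) = 0"
    by (rule orth)
  then show ?thesis by simp
qed

lemma symmetric_matrix_invariant_subspace_eigenbasis:
  fixes C :: "real^'n^'n"
  assumes sym: "transpose C = C"
  shows "subspace S \<Longrightarrow> (\<And>x. x \<in> S \<Longrightarrow> C *v x \<in> S) \<Longrightarrow>
    \<exists>B \<subseteq> S. finite B \<and> pairwise orthogonal B \<and> S \<subseteq> span B \<and>
      (\<forall>b\<in>B. norm b = 1 \<and> C *v b = (b \<bullet> (C *v b)) *\<^sub>R b)"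
proof (induction "dim S" arbitrary: S rule: less_induct)
  case less
  show ?case
  proof (cases "S = {0}")
    case True
    then show ?thesis by (intro exI[of _ "{}"]) auto
  next
    case False
    then obtain v where v: "v \<in> S" "norm v = 1"
      and vmax: "\<And>x. x \<in> S \<Longrightarrow> x \<bullet> (C *v x) \<le> (v \<bullet> (C *v v)) * (x \<bullet> x)"
      using quadratic_form_max_on_sphere[OF less.prems(1)] by metis
    have vv: "v \<bullet> v = 1" using v(2) by (simp add: norm_eq_1)
    have Cv: "C *v v = (v \<bullet> (C *v v)) *\<^sub>R v"
      using quadratic_form_maximizer_eigenvector[OF sym less.prems v(1) vv vmax] by simp
    define S' where "S' = S \<inter> {x. v \<bullet> x = 0}"
    have S': "subspace S'"
      unfolding S'_def using less.prems(1) subspace_hyperplane[of v] by (rule subspace_inter)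
    have inv': "C *v x \<in> S'" if "x \<in> S'" for x
    proof -
      have "v \<bullet> (C *v x) = (C *v v) \<bullet> x" by (rule inner_matrix_symmetric[OF sym])
      then show ?thesis using that less.prems(2) by (subst (asm) Cv) (auto simp: S'_def)
    qed
    have "v \<notin> S'" using vv by (simp add: S'_def)
    then have "S' \<subset> S" using v(1) unfolding S'_def by blast
    then have "dim S' < dim S"
      using S' less.prems(1) by (metis dim_psubset span_eq_iff)
    then obtain B' where B': "B' \<subseteq> S'" "finite B'" "pairwise orthogonal B'" "S' \<subseteq> span B'"
      "\<forall>b\<in>B'. norm b = 1 \<and> C *v b = (b \<bullet> (C *v b)) *\<^sub>R b"
      using less.hyps[OF _ S' inv'] by blast
    have "S \<subseteq> span (insert v B')"
    proof
      fix x assume x: "x \<in> S"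
      have "x - (v \<bullet> x) *\<^sub>R v \<in> S'"
        using x v vv less.prems(1) by (simp add: S'_def subspace_diff subspace_scale inner_diff_right)
      then have "x - (v \<bullet> x) *\<^sub>R v \<in> span (insert v B')"
        using B'(4) span_mono[of B' "insert v B'"] by blast
      then have "x - (v \<bullet> x) *\<^sub>R v + (v \<bullet> x) *\<^sub>R v \<in> span (insert v B')"
        by (rule span_add[OF _ span_scale[OF span_base]]) simp_all
      then show "x \<in> span (insert v B')" by simp
    qed
    moreover have "pairwise orthogonal (insert v B')"
      using B'(1,3) by (auto simp: pairwise_insert S'_def orthogonal_def inner_commute)
    ultimately show ?thesis
      using B' v Cv by (intro exI[of _ "insert v B'"]) (auto simp: S'_def)
  qed
qed

theorem symmetric_matrix_orthonormal_eigenbasis: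
  fixes C :: "real^'n^'n"
  assumes "transpose C = C"
  obtains B l where "orthonormal_basis B" "\<And>b. b \<in> B \<Longrightarrow> C *v b = l b *\<^sub>R b"
proof -
  obtain B where "finite B" "pairwise orthogonal B" "UNIV \<subseteq> span B"
    "\<forall>b\<in>B. norm b = 1 \<and> C *v b = (b \<bullet> (C *v b)) *\<^sub>R b"
    using symmetric_matrix_invariant_subspace_eigenbasis[OF assms subspace_UNIV] by blast
  then show ?thesis
    using that[of B "\<lambda>b. b \<bullet> (C *v b)"] by (auto simp: orthonormal_basis_def)
qed

section \<open>Square roots and polar decomposition\<close>

lemma matrix_from_basis_images:
  fixes w :: "real^'m \<Rightarrow> real^'n"
  assumes B: "orthonormal_basis B"
  obtains P :: "real^'m^'n"
    where "\<And>x. P *v x = (\<Sum>b\<in>B. (x \<bullet> b) *\<^sub>R w b)" "\<And>b. b \<in> B \<Longrightarrow> P *v b = w b"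
proof -
  define f where "f x = (\<Sum>b\<in>B. (x \<bullet> b) *\<^sub>R w b)" for x
  have "linear f"
    unfolding f_def
    by (rule linearI) (simp_all add: inner_add_left sum.distrib algebra_simps scaleR_sum_right)
  then have "matrix f *v x = f x" for x
    by (simp add: matrix_works linear_matrix_vector_mul_eq)
  moreover have "f b = w b" if "b \<in> B" for b
  proof -
    have "f b = (\<Sum>c\<in>B. if c = b then w b else 0)"
      unfolding f_def
    proof (rule sum.cong[OF refl])
      fix c assume "c \<in> B"
      then show "(b \<bullet> c) *\<^sub>R w c = (if c = b then w b else 0)"
        using orthonormal_basis_inner[OF B that] by (cases "c = b") auto
    qed
    then show ?thesis using B that by (simp add: orthonormal_basis_def)
  qed
  ultimately show ?thesis
    using that[of "matrix f"] by (simp add: f_def)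
qed

lemma psd_eigenvalue_nonneg:
  assumes "psd C" "norm b = 1" "C *v b = l *\<^sub>R b"
  shows "l \<ge> 0"
proof -
  have "b \<bullet> (C *v b) = l" using assms(2,3) by (simp add: norm_eq_1)
  moreover have "b \<bullet> (C *v b) \<ge> 0" using assms(1) by (simp add: psd_def)
  ultimately show ?thesis by simp
qed

lemma psd_diagonal_in_orthonormal_basis:
  fixes m :: "real^'n \<Rightarrow> real"
  assumes B: "orthonormal_basis B" and m: "\<And>b. b \<in> B \<Longrightarrow> m b \<ge> 0"
  obtains S where "psd S" "\<And>b. b \<in> B \<Longrightarrow> S *v b = m b *\<^sub>R b"
proof -
  obtain S :: "real^'n^'n" where S: "\<And>x. S *v x = (\<Sum>b\<in>B. (x \<bullet> b) *\<^sub>R (m b *\<^sub>R b))"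
    and Sb: "\<And>b. b \<in> B \<Longrightarrow> S *v b = m b *\<^sub>R b"
    using matrix_from_basis_images[OF B, of "\<lambda>b. m b *\<^sub>R b"] by blast
  have quad: "x \<bullet> (S *v y) = (\<Sum>b\<in>B. m b * (x \<bullet> b) * (y \<bullet> b))" for x y
    by (simp add: S inner_sum_right mult_ac)
  have "x \<bullet> (transpose S *v y) = x \<bullet> (S *v y)" for x y
  proof -
    have "x \<bullet> (transpose S *v y) = y \<bullet> (S *v x)"
      by (metis dot_lmul_matrix inner_commute transpose_matrix_vector)
    then show ?thesis by (simp add: quad mult_ac)
  qed
  then have "transpose S *v y = S *v y" for y
    by (metis vector_eq_ldot)
  then have "transpose S = S" by (simp add: matrix_eq)
  moreover have "x \<bullet> (S *v x) \<ge> 0" for x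
    unfolding quad using m by (intro sum_nonneg) (simp add: mult.assoc)
  ultimately have "psd S" by (simp add: psd_def)
  then show ?thesis using that Sb by blast
qed

lemma psd_square_root_on_eigenvector:
  assumes P: "psd P" "P ** P = C" and b: "C *v b = l *\<^sub>R b" and l: "l \<ge> 0"
  shows "P *v b = sqrt l *\<^sub>R b"
proof -
  define m where "m = sqrt l"
  define u where "u = P *v b - m *\<^sub>R b"
  have Ppos: "x \<bullet> (P *v x) \<ge> 0" for x using P(1) by (simp add: psd_def)
  have PPb: "P *v (P *v b) = l *\<^sub>R b" using P(2) b by (simp add: matrix_vector_mul_assoc)
  have Pu: "P *v u = - m *\<^sub>R u"
    using PPb l by (simp add: u_def m_def algebra_simps matrix_vector_mult_scaleR)
  then have "u \<bullet> (P *v u) + m * (u \<bullet> u) = 0" by simp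
  moreover have "m * (u \<bullet> u) \<ge> 0" using l by (simp add: m_def)
  ultimately have "m * (u \<bullet> u) = 0"
    using Ppos[of u] by linarith
  moreover have "u \<bullet> u = 0" if "m = 0"
  proof -
    have "u \<bullet> u = b \<bullet> (P *v (P *v b))"
      using that P(1) inner_matrix_symmetric[of P b "P *v b"] by (simp add: u_def psd_def)
    then show ?thesis using PPb that by (simp add: m_def)
  qed
  ultimately have "u = 0" by auto
  then show ?thesis by (simp add: u_def m_def)
qed

theorem psd_sqrt_in_eigenbasis:
  assumes C: "psd C" and B: "orthonormal_basis B" and l: "\<And>b. b \<in> B \<Longrightarrow> C *v b = l b *\<^sub>R b"
  shows "psd (psd_sqrt C)" "psd_sqrt C ** psd_sqrt C = C"
    "\<And>b. b \<in> B \<Longrightarrow> psd_sqrt C *v b = sqrt (l b) *\<^sub>R b"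
proof -
  have l_nonneg: "l b \<ge> 0" if "b \<in> B" for b
    using psd_eigenvalue_nonneg[OF C _ l[OF that]] B that by (simp add: orthonormal_basis_def)
  obtain S where S: "psd S" "\<And>b. b \<in> B \<Longrightarrow> S *v b = sqrt (l b) *\<^sub>R b"
    using psd_diagonal_in_orthonormal_basis[OF B, of "\<lambda>b. sqrt (l b)"] l_nonneg by auto
  have SS: "S ** S = C"
    using B by (rule matrix_eq_on_orthonormal_basis)
      (simp add: S l l_nonneg matrix_vector_mul_assoc[symmetric] matrix_vector_mult_scaleR)
  have unique: "P = S" if "psd P" "P ** P = C" for P
    using B by (rule matrix_eq_on_orthonormal_basis)
      (simp add: S psd_square_root_on_eigenvector[OF that l l_nonneg])
  have "psd_sqrt C = S"
    unfolding psd_sqrt_def by (rule the_equality) (use S(1) SS unique in blast)+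
  then show "psd (psd_sqrt C)" "psd_sqrt C ** psd_sqrt C = C"
    "\<And>b. b \<in> B \<Longrightarrow> psd_sqrt C *v b = sqrt (l b) *\<^sub>R b"
    using S SS by auto
qed

corollary psd_psd_sqrt:
  assumes "psd C"
  shows "psd (psd_sqrt C)"
proof -
  have "transpose C = C" using assms by (simp add: psd_def)
  then obtain B l where "orthonormal_basis B" "\<And>b. b \<in> B \<Longrightarrow> C *v b = l b *\<^sub>R b"
    using symmetric_matrix_orthonormal_eigenbasis by metis
  then show ?thesis using psd_sqrt_in_eigenbasis(1)[OF assms] by blast
qed

lemma orthonormal_family_extend:
  fixes u :: "'i \<Rightarrow> 'a::euclidean_space"
  assumes I: "finite I" "J \<subseteq> I" "card I \<le> DIM('a)"
    and u: "\<And>i j. i \<in> J \<Longrightarrow> j \<in> J \<Longrightarrow> u i \<bullet> u j = (if i = j then 1 else 0)"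
  obtains w where "\<And>i. i \<in> J \<Longrightarrow> w i = u i"
    "\<And>i j. i \<in> I \<Longrightarrow> j \<in> I \<Longrightarrow> w i \<bullet> w j = (if i = j then 1 else 0)"
proof -
  have inj: "inj_on u J"
    by (rule inj_onI) (metis u zero_neq_one)
  have "pairwise orthogonal (u ` J)"
    using u by (auto simp: pairwise_def orthogonal_def inj_on_eq_iff[OF inj])
  moreover have "0 \<notin> u ` J"
    using u by (metis imageE inner_zero_left zero_neq_one)
  ultimately have ind: "independent (u ` J)"
    by (rule pairwise_orthogonal_independent)
  define Q where "Q = {y. \<forall>x\<in>span (u ` J). orthogonal x y}"
  have Q: "subspace Q"
    unfolding Q_def by (rule subspace_orthogonal_to_vectors)
  have "dim {y \<in> UNIV. \<forall>x\<in>span (u ` J). orthogonal x y} + dim (span (u ` J)) = dim (UNIV :: 'a set)"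
    by (rule dim_subspace_orthogonal_to_vectors) auto
  then have "dim Q + card J = DIM('a)"
    using ind inj by (simp add: Q_def dim_span dim_eq_card_independent card_image)
  moreover obtain E where E: "E \<subseteq> Q" "pairwise orthogonal E" "\<And>x. x \<in> E \<Longrightarrow> norm x = 1"
    "independent E" "card E = dim Q"
    using orthonormal_basis_subspace[OF Q] by metis
  ultimately have "card (I - J) \<le> card E"
    using I by (simp add: card_Diff_subset finite_subset)
  then obtain g where g: "g ` (I - J) \<subseteq> E" "inj_on g (I - J)"
    using card_le_inj[of "I - J" E] I(1) E(4) independent_imp_finite by blast
  define w where "w i = (if i \<in> J then u i else g i)" for i
  have "w i \<bullet> w j = (if i = j then 1 else 0)" if "i \<in> I" "j \<in> I" for i j
  proof -
    have Qorth: "u i \<bullet> y = 0" if "i \<in> J" "y \<in> Q" for i y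
      using that by (auto simp: Q_def orthogonal_def intro: span_base)
    have gE: "g i \<in> E" if "i \<in> I - J" for i using g(1) that by blast
    have "g i \<bullet> g j = (if i = j then 1 else 0)" if "i \<in> I - J" "j \<in> I - J"
      using gE[OF that(1)] gE[OF that(2)] E(2,3) inj_on_eq_iff[OF g(2) that]
      by (auto simp: pairwise_def orthogonal_def norm_eq_1)
    then show ?thesis
      using that u Qorth[of i "g j"] Qorth[of j "g i"] gE E(1)
      by (auto simp: w_def inner_commute)
  qed
  then show ?thesis using that[of w] by (simp add: w_def)
qed

lemma orthonormal_basis_card:
  fixes B :: "'a::euclidean_space set"
  assumes "orthonormal_basis B"
  shows "card B = DIM('a)"
proof -
  have "independent B"
    using assms pairwise_orthogonal_independent[of B]
    by (metis norm_zero orthonormal_basis_def zero_neq_one)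
  then show ?thesis
    using assms dim_eq_card_independent[of B] dim_span[of B] by (simp add: orthonormal_basis_def)
qed

lemma transpose_mult_self_eq_mat_1:
  fixes P :: "real^'m^'n"
  assumes "\<And>x y. (P *v x) \<bullet> (P *v y) = x \<bullet> y"
  shows "transpose P ** P = mat 1"
proof -
  have "x \<bullet> ((transpose P ** P) *v y) = x \<bullet> (mat 1 *v y)" for x y
    using assms[of x y] by (metis dot_lmul_matrix matrix_vector_mul_assoc matrix_vector_mul_lid
        transpose_matrix_vector inner_commute)
  then show ?thesis by (metis matrix_eq vector_eq_ldot)
qed

lemma isometry_from_orthonormal_images:
  fixes w :: "real^'m \<Rightarrow> real^'n"
  assumes B: "orthonormal_basis B"
    and w: "\<And>b c. b \<in> B \<Longrightarrow> c \<in> B \<Longrightarrow> w b \<bullet> w c = (if b = c then 1 else 0)"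
  obtains P :: "real^'m^'n" where "\<And>b. b \<in> B \<Longrightarrow> P *v b = w b" "transpose P ** P = mat 1"
proof -
  obtain P :: "real^'m^'n" where P: "\<And>x. P *v x = (\<Sum>b\<in>B. (x \<bullet> b) *\<^sub>R w b)"
    and Pb: "\<And>b. b \<in> B \<Longrightarrow> P *v b = w b"
    using matrix_from_basis_images[OF B, of w] by blast
  have fin: "finite B" using B by (simp add: orthonormal_basis_def)
  have Pw: "(P *v x) \<bullet> w b = x \<bullet> b" if "b \<in> B" for x b
    unfolding P using fin that w by (rule inner_sum_orthonormal)
  have "(P *v x) \<bullet> (P *v y) = x \<bullet> y" for x y
  proof -
    have "(P *v x) \<bullet> (P *v y) = (\<Sum>b\<in>B. (x \<bullet> b) * (w b \<bullet> (P *v y)))"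
      by (simp add: P[of x] inner_sum_left)
    also have "\<dots> = (\<Sum>b\<in>B. (x \<bullet> b) * (y \<bullet> b))"
      by (intro sum.cong refl) (metis Pw inner_commute)
    also have "\<dots> = x \<bullet> y"
      by (rule orthonormal_basis_parseval[OF B, symmetric])
    finally show ?thesis .
  qed
  then show ?thesis using that Pb transpose_mult_self_eq_mat_1 by blast
qed

lemma inner_transpose_mult:
  fixes A :: "real^'m^'n"
  shows "(transpose A *v x) \<bullet> (transpose A *v y) = x \<bullet> ((A ** transpose A) *v y)"
  by (metis dot_lmul_matrix matrix_vector_mul_assoc transpose_matrix_vector transpose_transpose)

lemma psd_mult_transpose: "psd (A ** transpose A)"
  unfolding psd_def by (metis inner_transpose_mult inner_ge_zero matrix_transpose_mul transpose_transpose)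

text \<open>Polar decomposition \<open>A = (A A\<^sup>T)\<^sup>1\<^sup>/\<^sup>2 U\<close> with orthonormal rows of \<open>U\<close>: on an eigenbasis
  \<open>b\<close> of \<open>A A\<^sup>T\<close> the rows of \<open>U\<close> map \<open>b\<close> to \<open>A\<^sup>T b / |A\<^sup>T b|\<close>, completed by
  orthonormal vectors for the kernel; there is room for them since \<open>k \<le> T\<close>.\<close>

theorem polar_decomposition:
  fixes A :: "real^'t^'k"
  assumes "CARD('k) \<le> CARD('t)"
  obtains U :: "real^'t^'k" where "U ** transpose U = mat 1" "psd_sqrt (A ** transpose A) ** U = A"
proof -
  define C where "C = A ** transpose A"
  have "transpose C = C" by (simp add: C_def matrix_transpose_mul)
  then obtain B l where B: "orthonormal_basis B" and l: "\<And>b. b \<in> B \<Longrightarrow> C *v b = l b *\<^sub>R b"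
    using symmetric_matrix_orthonormal_eigenbasis by metis
  define S where "S = psd_sqrt C"
  have S: "psd S" "\<And>b. b \<in> B \<Longrightarrow> S *v b = sqrt (l b) *\<^sub>R b"
    unfolding S_def using psd_sqrt_in_eigenbasis[OF psd_mult_transpose B l[unfolded C_def]]
    by (simp_all add: C_def)
  have ATb: "(transpose A *v b) \<bullet> (transpose A *v c) = l c * (b \<bullet> c)" if "c \<in> B" for b c
    using inner_transpose_mult[of A b c] l[OF that] by (simp add: C_def)
  define u where "u b = (1 / sqrt (l b)) *\<^sub>R (transpose A *v b)" for b
  have "u b \<bullet> u c = (if b = c then 1 else 0)" if "b \<in> {b \<in> B. l b > 0}" "c \<in> {b \<in> B. l b > 0}" for b c
    using that ATb orthonormal_basis_inner[OF B, of b c] by (auto simp: u_def field_simps)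
  moreover have "card B \<le> DIM(real^'t)"
    using orthonormal_basis_card[OF B] assms by simp
  ultimately obtain w where w: "\<And>b. b \<in> B \<Longrightarrow> l b > 0 \<Longrightarrow> w b = u b"
    "\<And>b c. b \<in> B \<Longrightarrow> c \<in> B \<Longrightarrow> w b \<bullet> w c = (if b = c then 1 else 0)"
    using orthonormal_family_extend[of B "{b \<in> B. l b > 0}" u] B
    unfolding orthonormal_basis_def by (metis (mono_tags, lifting) mem_Collect_eq subsetI)
  obtain P :: "real^'k^'t" where P: "\<And>b. b \<in> B \<Longrightarrow> P *v b = w b" "transpose P ** P = mat 1"
    using isometry_from_orthonormal_images[OF B w(2)] by blast
  have "(P ** S) *v b = transpose A *v b" if b: "b \<in> B" for b
  proof (cases "l b > 0")
    case True
    then show ?thesis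
      using b by (simp add: S P w u_def matrix_vector_mul_assoc[symmetric] matrix_vector_mult_scaleR)
  next
    case False
    have "l b \<ge> 0"
      using psd_eigenvalue_nonneg[OF psd_mult_transpose _ l[OF b, unfolded C_def]] b B
      by (simp add: orthonormal_basis_def)
    with False have "l b = 0" by simp
    then have "transpose A *v b = 0"
      using ATb[OF b, of b] by simp
    then show ?thesis
      using b \<open>l b = 0\<close> by (simp add: S matrix_vector_mul_assoc[symmetric])
  qed
  then have "P ** S = transpose A"
    by (rule matrix_eq_on_orthonormal_basis[OF B])
  then have "S ** transpose P = A"
    using S(1) by (metis matrix_transpose_mul psd_def transpose_transpose)
  then show ?thesis
    using that[of "transpose P"] P(2) by (simp add: S_def C_def)
qed

section \<open>The saddle point\<close>

lemma trace_transpose_mult_eq_inner: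
  fixes P Q :: "real^'n^'m"
  shows "trace (transpose P ** Q) = P \<bullet> Q"
proof -
  have "trace (transpose P ** Q) = (\<Sum>j\<in>UNIV. \<Sum>i\<in>UNIV. P $ i $ j * Q $ i $ j)"
    by (simp add: trace_def matrix_matrix_mult_def transpose_def)
  also have "\<dots> = P \<bullet> Q"
    by (subst sum.swap) (simp add: inner_vec_def)
  finally show ?thesis .
qed

lemma trace_scaleR: "trace (c *\<^sub>R P) = c * trace (P :: real^'n^'n)"
  by (simp add: trace_def sum_distrib_left)

lemma matrix_diff_ldistrib: "(A :: 'a::ring_1^'n^'m) ** (B - C) = A ** B - A ** C"
  by (simp add: matrix_matrix_mult_def vec_eq_iff sum_subtractf algebra_simps)

lemma inner_mult_symmetric_left:
  fixes S :: "real^'k^'k" and Y Z :: "real^'t^'k"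
  assumes "transpose S = S"
  shows "Y \<bullet> (S ** Z) = (S ** Y) \<bullet> Z"
  by (metis assms matrix_mul_assoc matrix_transpose_mul trace_transpose_mult_eq_inner)

lemma psd_inner_mult_nonneg:
  fixes S :: "real^'k^'k" and Z :: "real^'t^'k"
  assumes "psd S"
  shows "Z \<bullet> (S ** Z) \<ge> 0"
proof -
  have "Z \<bullet> (S ** Z) = (\<Sum>j\<in>UNIV. column j Z \<bullet> (S *v column j Z))"
    unfolding trace_transpose_mult_eq_inner[symmetric]
    by (simp add: trace_def matrix_matrix_mult_def transpose_def column_def inner_vec_def
        matrix_vector_mult_def sum_distrib_left mult_ac)
  also have "\<dots> \<ge> 0" using assms by (intro sum_nonneg) (simp add: psd_def)
  finally show ?thesis .
qed

lemma inner_mult_orthonormal_rows: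
  fixes S :: "real^'k^'k" and U :: "real^'t^'k"
  assumes "U ** transpose U = mat 1"
  shows "U \<bullet> (S ** U) = trace S"
  by (metis assms matrix_mul_assoc matrix_mul_rid trace_mul_sym trace_transpose_mult_eq_inner)

text \<open>Completing the square around \<open>r U\<close>.\<close>

lemma polar_completing_square:
  fixes S :: "real^'k^'k" and U Y :: "real^'t^'k"
  assumes S: "psd S" and U: "U ** transpose U = mat 1"
  shows "2 * r * ((S ** U) \<bullet> Y) \<le> Y \<bullet> (S ** Y) + r\<^sup>2 * trace S"
proof -
  have sym: "transpose S = S" using S by (simp add: psd_def)
  have "U \<bullet> (S ** U) = trace S"
    by (rule inner_mult_orthonormal_rows[OF U])
  moreover have "U \<bullet> (S ** Y) = (S ** U) \<bullet> Y"
    by (rule inner_mult_symmetric_left[OF sym])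
  moreover have "S ** (Y - r *\<^sub>R U) = S ** Y - r *\<^sub>R (S ** U)"
    by (simp add: matrix_diff_ldistrib matrix_scalar_ac scalar_matrix_assoc[symmetric])
  ultimately have "(Y - r *\<^sub>R U) \<bullet> (S ** (Y - r *\<^sub>R U))
      = Y \<bullet> (S ** Y) - 2 * r * ((S ** U) \<bullet> Y) + r\<^sup>2 * trace S"
    by (simp add: inner_diff_left inner_diff_right inner_commute[of Y "S ** U"])
      (simp add: power2_eq_square algebra_simps)
  moreover have "0 \<le> (Y - r *\<^sub>R U) \<bullet> (S ** (Y - r *\<^sub>R U))"
    by (rule psd_inner_mult_nonneg[OF S])
  ultimately show ?thesis by linarith
qed

lemma saddle_point_value:
  fixes f :: "'y \<Rightarrow> 'm \<Rightarrow> real"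
  assumes y0: "\<And>m. f y0 m = v" and m0: "\<And>y. v \<le> f y m0"
  shows "(SUP m. ereal (f y0 m)) = v" and "(INF y. ereal (f y m0)) = v"
    and "(SUP m. ereal (f y0 m)) \<le> (SUP m. ereal (f y m))"
    and "(INF y. ereal (f y m)) \<le> (INF y. ereal (f y m0))"
    and "(SUP m. INF y. ereal (f y m)) = v"
proof -
  show sup: "(SUP m. ereal (f y0 m)) = v" by (simp add: y0)
  show inf: "(INF y. ereal (f y m0)) = v"
    by (rule antisym) (use y0[of m0] m0 in \<open>auto intro: INF_lower2 INF_greatest\<close>)
  show "(SUP m. ereal (f y0 m)) \<le> (SUP m. ereal (f y m))"
    unfolding sup using m0[of y] by (auto intro: SUP_upper2)
  show "(INF y. ereal (f y m)) \<le> (INF y. ereal (f y m0))"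
    unfolding inf using y0[of m] by (auto intro: INF_lower2)
  show "(SUP m. INF y. ereal (f y m)) = v"
  proof (rule antisym)
    show "(SUP m. INF y. ereal (f y m)) \<le> v"
      by (rule SUP_least, rule INF_lower2[of y0]) (simp_all add: y0)
    show "ereal v \<le> (SUP m. INF y. ereal (f y m))"
      unfolding inf[symmetric] by (rule SUP_upper) simp
  qed
qed

lemma G_eq_inner:
  fixes X :: "real^'t^'n" and W :: "real^'n^'k"
  shows "G X W Y M = - (2 / real CARD('t)) * ((W ** X) \<bullet> Y)
     + (1 / real CARD('t)) * trace (M ** Y ** transpose Y) - trace M"
proof -
  have "transpose X ** transpose W = transpose (W ** X)"
    by (simp add: matrix_transpose_mul)
  then show ?thesis
    by (simp add: G_def trace_transpose_mult_eq_inner matrix_diff_ldistrib matrix_scalar_ac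
        scalar_matrix_assoc[symmetric] trace_sub trace_scaleR matrix_mul_assoc)
qed

lemma G_saddle_point:
  fixes X :: "real^'t^'n" and W :: "real^'n^'k"
  assumes "CARD('k) \<le> CARD('t)"
  obtains Y0 M0 where
    "\<And>M. G X W Y0 M = - (2 / sqrt (real CARD('t))) * trace (psd_sqrt (W ** X ** transpose X ** transpose W))"
    "\<And>Y. - (2 / sqrt (real CARD('t))) * trace (psd_sqrt (W ** X ** transpose X ** transpose W)) \<le> G X W Y M0"
proof -
  define A where "A = W ** X"
  define S where "S = psd_sqrt (A ** transpose A)"
  define T where "T = real CARD('t)"
  define r where "r = sqrt T"
  have S_def': "S = psd_sqrt (W ** X ** transpose X ** transpose W)"
    by (simp add: S_def A_def matrix_transpose_mul matrix_mul_assoc)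
  obtain U where U: "U ** transpose U = mat 1" and SU: "S ** U = A"
    using polar_decomposition[OF assms, of A] unfolding S_def by blast
  have S: "psd S" unfolding S_def by (rule psd_psd_sqrt[OF psd_mult_transpose])
  have r: "r > 0" "r * r = T" "r\<^sup>2 = T" "T > 0" by (simp_all add: r_def T_def)
  have saddle_Y0: "G X W (r *\<^sub>R U) M = - (2 / r) * trace S" for M
  proof -
    have "trace (M ** (r *\<^sub>R U) ** transpose (r *\<^sub>R U)) = T * trace M"
      using r by (simp add: transpose_scalar matrix_scalar_ac scalar_matrix_assoc[symmetric]
          U trace_scaleR matrix_mul_assoc[symmetric])
    moreover have "A \<bullet> (r *\<^sub>R U) = r * trace S"
      using inner_mult_orthonormal_rows[OF U, of S] SU by (simp add: inner_commute)
    ultimately show ?thesis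
      using r by (simp add: G_eq_inner A_def T_def[symmetric] field_simps)
  qed
  have saddle_M0: "- (2 / r) * trace S \<le> G X W Y ((1 / r) *\<^sub>R S)" for Y
  proof -
    have "trace (S ** Y ** transpose Y) = Y \<bullet> (S ** Y)"
      by (metis matrix_mul_assoc trace_mul_sym trace_transpose_mult_eq_inner)
    then have "G X W Y ((1 / r) *\<^sub>R S) + (2 / r) * trace S
        = (Y \<bullet> (S ** Y) + r\<^sup>2 * trace S - 2 * r * (A \<bullet> Y)) / (r * T)"
      using r(1) by (simp add: G_eq_inner A_def T_def[symmetric] r(2)[symmetric] trace_scaleR
          scalar_matrix_assoc[symmetric] field_simps power2_eq_square)
    moreover have "2 * r * (A \<bullet> Y) \<le> Y \<bullet> (S ** Y) + r\<^sup>2 * trace S"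
      using polar_completing_square[OF S U] SU by simp
    ultimately have "0 \<le> G X W Y ((1 / r) *\<^sub>R S) + (2 / r) * trace S"
      using r by (simp add: divide_nonneg_pos)
    then show ?thesis by simp
  qed
  show ?thesis
    using that[of "r *\<^sub>R U" "(1 / r) *\<^sub>R S"] saddle_Y0 saddle_M0
    unfolding S_def' r_def T_def by blast
qed

theorem proposition5:
  fixes X :: "real^'t^'n" and W :: "real^'n^'k"
  assumes "CARD('k) \<le> CARD('n)" and "CARD('k) \<le> CARD('t)"
  defines "v \<equiv> - (2 / sqrt (real CARD('t))) * trace (psd_sqrt (W ** X ** transpose X ** transpose W))"
  shows "(\<exists>Y0. (\<forall>Y. (SUP M. ereal (G X W Y0 M)) \<le> (SUP M. ereal (G X W Y M)))
              \<and> (\<exists>M0. \<forall>M. G X W Y0 M \<le> G X W Y0 M0)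
              \<and> (SUP M. ereal (G X W Y0 M)) = ereal v)
       \<and> (\<exists>M0. (\<forall>M. (INF Y. ereal (G X W Y M)) \<le> (INF Y. ereal (G X W Y M0)))
              \<and> (\<exists>Y0. \<forall>Y. G X W Y0 M0 \<le> G X W Y M0)
              \<and> (INF Y. ereal (G X W Y M0)) = ereal v)
       \<and> (SUP M. INF Y. ereal (L_PSW X W M Y)) =
           ereal (trace (- (2 / sqrt (real CARD('t))) *\<^sub>R psd_sqrt (W ** X ** transpose X ** transpose W)
                        + W ** transpose W))"
proof -
  \<comment> \<open>Only \<open>CARD('k) \<le> CARD('t)\<close> is needed (for the polar factor); \<open>CARD('k) \<le> CARD('n)\<close> is not.\<close>
  obtain Y0 M0 where Y0: "\<And>M. G X W Y0 M = v" and M0: "\<And>Y. v \<le> G X W Y M0"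
    using G_saddle_point[OF assms(2)] unfolding v_def by blast
  note saddle = saddle_point_value[of "G X W" Y0 v M0, OF Y0 M0]
  define c where "c = trace (transpose W ** W)"
  have "(SUP M. INF Y. ereal (L_PSW X W M Y)) = ereal (v + c)"
    using saddle_point_value(5)[of "\<lambda>Y M. G X W Y M + c" Y0 "v + c" M0] Y0 M0
    by (simp add: L_PSW_def c_def)
  moreover have "trace (- (2 / sqrt (real CARD('t))) *\<^sub>R psd_sqrt (W ** X ** transpose X ** transpose W)
      + W ** transpose W) = v + c"
    using trace_mul_sym[of W "transpose W"] by (simp add: v_def c_def trace_sub trace_scaleR)
  ultimately show ?thesis
    using saddle Y0 M0 by metis
qed

end
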